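(* Fix a multi-time quantum process except for the channel at one time step $t_j$, and fix all measurements. For CPTP maps $\mathcal{E}_{t_j\leftarrow t_{j-1}}$ and $\mathcal{K}_{t_j\leftarrow t_{j-1}}$ from $t_{j-1}$ to $t_j$ and $\lambda\in[0,1]$, writing $\overrightarrow{Q}_{\rm KD}[\mathcal{F}]$ for the right temporal KD distribution of the process whose channel at step $t_j$ is $\mathcal{F}$, $$\mathcal{N}\big[\overrightarrow{Q}_{\rm KD}[\lambda\mathcal{E}_{t_j\leftarrow t_{j-1}}+(1-\lambda)\mathcal{K}_{t_j\leftarrow t_{j-1}}]\big]\le\lambda\,\mathcal{N}\big[\overrightarrow{Q}_{\rm KD}[\mathcal{E}_{t_j\leftarrow t_{j-1}}]\big]+(1-\lambda)\,\mathcal{N}\big[\overrightarrow{Q}_{\rm KD}[\mathcal{K}_{t_j\leftarrow t_{j-1}}]\big].$$ The same holds for the left and doubled temporal KD distributions.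
   Context: A multi-time quantum process $(\rho_{t_0},\mathcal{E}_{t_1\leftarrow t_0},\dots,\mathcal{E}_{t_n\leftarrow t_{n-1}})$ consists of a density operator and CPTP maps on finite-dimensional spaces, extended linearly to all operators; complete families of orthogonal projectors are fixed at each time. $\overrightarrow{Q}_{\rm KD}(b_n,\dots,b_0)=\operatorname{Tr}[\mathcal{E}_{t_n\leftarrow t_{n-1}}(\cdots\mathcal{E}_{t_1\leftarrow t_0}(\rho_{t_0}\Pi^{t_0}_{b_0})\Pi^{t_1}_{b_1}\cdots)\Pi^{t_n}_{b_n}]$; $\overleftarrow{Q}_{\rm KD}(a_n,\dots,a_0)=\operatorname{Tr}[\Pi^{t_n}_{a_n}\mathcal{E}_{t_n\leftarrow t_{n-1}}(\cdots\Pi^{t_1}_{a_1}\mathcal{E}_{t_1\leftarrow t_0}(\Pi^{t_0}_{a_0}\rho_{t_0})\cdots)]$; $\overleftrightarrow{Q}_{\rm KD}(a;b)=\operatorname{Tr}[\Pi^{t_n}_{a_n}\mathcal{E}_{t_n\leftarrow t_{n-1}}(\cdots\Pi^{t_1}_{a_1}\mathcal{E}_{t_1\leftarrow t_0}(\Pi^{t_0}_{a_0}\rho_{t_0}\Pi^{t_0}_{b_0})\Pi^{t_1}_{b_1}\cdots)\Pi^{t_n}_{b_n}]$. For any such distribution $Q$, $\mathcal{N}[Q]=\sum_{\text{all outcomes}}|Q|-1$. *)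

theory Defs
  imports "HOL-Library.FuncSet" "Jordan_Normal_Form.Schur_Decomposition"
begin

definition mtrace :: "complex mat \<Rightarrow> complex" where
  "mtrace A = (\<Sum>i<dim_row A. A $$ (i, i))"

definition psd :: "nat \<Rightarrow> complex mat \<Rightarrow> bool" where
  "psd d A \<longleftrightarrow> A \<in> carrier_mat d d \<and>
     (\<forall>v \<in> carrier_vec d. Im ((A *\<^sub>v v) \<bullet>c v) = 0 \<and> Re ((A *\<^sub>v v) \<bullet>c v) \<ge> 0)"

definition density_op :: "nat \<Rightarrow> complex mat \<Rightarrow> bool" where
  "density_op d \<rho> \<longleftrightarrow> psd d \<rho> \<and> mtrace \<rho> = 1"

definition lin_map :: "nat \<Rightarrow> nat \<Rightarrow> (complex mat \<Rightarrow> complex mat) \<Rightarrow> bool" where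
  "lin_map d d' F \<longleftrightarrow>
     (\<forall>X \<in> carrier_mat d d. F X \<in> carrier_mat d' d') \<and>
     (\<forall>X \<in> carrier_mat d d. \<forall>Y \<in> carrier_mat d d. F (X + Y) = F X + F Y) \<and>
     (\<forall>X \<in> carrier_mat d d. \<forall>c. F (c \<cdot>\<^sub>m X) = c \<cdot>\<^sub>m F X)"

definition block :: "nat \<Rightarrow> complex mat \<Rightarrow> nat \<Rightarrow> nat \<Rightarrow> complex mat" where
  "block d X a b = mat d d (\<lambda>(i, j). X $$ (a * d + i, b * d + j))"

(* (id_k \<otimes> F) applied to a (k d) x (k d) matrix, giving a (k d') x (k d') matrix *)
definition ampliate :: "nat \<Rightarrow> nat \<Rightarrow> nat \<Rightarrow> (complex mat \<Rightarrow> complex mat) \<Rightarrow> complex mat \<Rightarrow> complex mat" where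
  "ampliate k d d' F X =
     mat (k * d') (k * d') (\<lambda>(i, j). F (block d X (i div d') (j div d')) $$ (i mod d', j mod d'))"

definition completely_positive :: "nat \<Rightarrow> nat \<Rightarrow> (complex mat \<Rightarrow> complex mat) \<Rightarrow> bool" where
  "completely_positive d d' F \<longleftrightarrow>
     (\<forall>k. \<forall>X. psd (k * d) X \<longrightarrow> psd (k * d') (ampliate k d d' F X))"

definition trace_preserving :: "nat \<Rightarrow> (complex mat \<Rightarrow> complex mat) \<Rightarrow> bool" where
  "trace_preserving d F \<longleftrightarrow> (\<forall>X \<in> carrier_mat d d. mtrace (F X) = mtrace X)"

definition CPTP :: "nat \<Rightarrow> nat \<Rightarrow> (complex mat \<Rightarrow> complex mat) \<Rightarrow> bool" where
  "CPTP d d' F \<longleftrightarrow> lin_map d d' F \<and> completely_positive d d' F \<and> trace_preserving d F"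

definition proj_family :: "nat \<Rightarrow> nat \<Rightarrow> (nat \<Rightarrow> complex mat) \<Rightarrow> bool" where
  "proj_family d m P \<longleftrightarrow>
     (\<forall>b<m. P b \<in> carrier_mat d d \<and> mat_adjoint (P b) = P b \<and> P b * P b = P b) \<and>
     (\<forall>b<m. \<forall>b'<m. b \<noteq> b' \<longrightarrow> P b * P b' = 0\<^sub>m d d) \<and>
     foldr (+) (map P [0..<m]) (0\<^sub>m d d) = 1\<^sub>m d"

(* Multi-time process: dimensions d k, initial state \<rho> at t_0, channels Ch k : t_(k-1) \<rightarrow> t_k
   for 1 \<le> k \<le> n, and projector families P k b (b < m k) at each time t_k, k \<le> n. *)
definition measurements :: "nat \<Rightarrow> (nat \<Rightarrow> nat) \<Rightarrow> (nat \<Rightarrow> nat) \<Rightarrow> (nat \<Rightarrow> nat \<Rightarrow> complex mat) \<Rightarrow> bool" where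
  "measurements n d m P \<longleftrightarrow> (\<forall>k\<le>n. proj_family (d k) (m k) (P k))"

definition outcomes :: "nat \<Rightarrow> (nat \<Rightarrow> nat) \<Rightarrow> (nat \<Rightarrow> nat) set" where
  "outcomes n m = Pi\<^sub>E {..n} (\<lambda>k. {..<m k})"

fun right_op :: "complex mat \<Rightarrow> (nat \<Rightarrow> complex mat \<Rightarrow> complex mat) \<Rightarrow> (nat \<Rightarrow> nat \<Rightarrow> complex mat)
                 \<Rightarrow> (nat \<Rightarrow> nat) \<Rightarrow> nat \<Rightarrow> complex mat" where
  "right_op \<rho> E P b 0 = \<rho> * P 0 (b 0)"
| "right_op \<rho> E P b (Suc k) = E (Suc k) (right_op \<rho> E P b k) * P (Suc k) (b (Suc k))"

fun left_op :: "complex mat \<Rightarrow> (nat \<Rightarrow> complex mat \<Rightarrow> complex mat) \<Rightarrow> (nat \<Rightarrow> nat \<Rightarrow> complex mat)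
                 \<Rightarrow> (nat \<Rightarrow> nat) \<Rightarrow> nat \<Rightarrow> complex mat" where
  "left_op \<rho> E P a 0 = P 0 (a 0) * \<rho>"
| "left_op \<rho> E P a (Suc k) = P (Suc k) (a (Suc k)) * E (Suc k) (left_op \<rho> E P a k)"

fun doubled_op :: "complex mat \<Rightarrow> (nat \<Rightarrow> complex mat \<Rightarrow> complex mat) \<Rightarrow> (nat \<Rightarrow> nat \<Rightarrow> complex mat)
                 \<Rightarrow> (nat \<Rightarrow> nat) \<Rightarrow> (nat \<Rightarrow> nat) \<Rightarrow> nat \<Rightarrow> complex mat" where
  "doubled_op \<rho> E P a b 0 = P 0 (a 0) * \<rho> * P 0 (b 0)"
| "doubled_op \<rho> E P a b (Suc k) =
     P (Suc k) (a (Suc k)) * E (Suc k) (doubled_op \<rho> E P a b k) * P (Suc k) (b (Suc k))"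

definition Q_right where "Q_right n \<rho> E P b = mtrace (right_op \<rho> E P b n)"
definition Q_left where "Q_left n \<rho> E P a = mtrace (left_op \<rho> E P a n)"
definition Q_doubled where "Q_doubled n \<rho> E P a b = mtrace (doubled_op \<rho> E P a b n)"

definition neg_right :: "nat \<Rightarrow> (nat \<Rightarrow> nat) \<Rightarrow> complex mat \<Rightarrow> (nat \<Rightarrow> complex mat \<Rightarrow> complex mat)
                          \<Rightarrow> (nat \<Rightarrow> nat \<Rightarrow> complex mat) \<Rightarrow> real" where
  "neg_right n m \<rho> E P = (\<Sum>b\<in>outcomes n m. cmod (Q_right n \<rho> E P b)) - 1"

definition neg_left :: "nat \<Rightarrow> (nat \<Rightarrow> nat) \<Rightarrow> complex mat \<Rightarrow> (nat \<Rightarrow> complex mat \<Rightarrow> complex mat)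
                          \<Rightarrow> (nat \<Rightarrow> nat \<Rightarrow> complex mat) \<Rightarrow> real" where
  "neg_left n m \<rho> E P = (\<Sum>a\<in>outcomes n m. cmod (Q_left n \<rho> E P a)) - 1"

definition neg_doubled :: "nat \<Rightarrow> (nat \<Rightarrow> nat) \<Rightarrow> complex mat \<Rightarrow> (nat \<Rightarrow> complex mat \<Rightarrow> complex mat)
                          \<Rightarrow> (nat \<Rightarrow> nat \<Rightarrow> complex mat) \<Rightarrow> real" where
  "neg_doubled n m \<rho> E P =
     (\<Sum>(a, b)\<in>outcomes n m \<times> outcomes n m. cmod (Q_doubled n \<rho> E P a b)) - 1"

definition mix_map :: "real \<Rightarrow> (complex mat \<Rightarrow> complex mat) \<Rightarrow> (complex mat \<Rightarrow> complex mat) \<Rightarrow> complex mat \<Rightarrow> complex mat" where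
  "mix_map p F G = (\<lambda>X. complex_of_real p \<cdot>\<^sub>m F X + complex_of_real (1 - p) \<cdot>\<^sub>m G X)"

end

theory Submission
  imports Defs
begin

(* Each of the three KD quasi-probabilities is the trace of a chain X_0, X_k = S_k (Ch_k X_(k-1)),
   where S_k multiplies by the projectors of time t_k.  All steps other than the one at t_j are
   linear, so the quasi-probability of every outcome is affine in the channel at t_j: the mixed
   channel yields the same mixture of quasi-probabilities.  The triangle inequality for |.|,
   summed over outcomes, then gives convexity of the negativity; the constant -1 is harmless
   because the weights sum to 1. *)

lemma lin_map_carrier:
  assumes "lin_map d d' F" "X \<in> carrier_mat d d"
  shows "F X \<in> carrier_mat d' d'"
  using assms unfolding lin_map_def by simp

lemma lin_map_linear_combination:
  assumes "lin_map d d' F" "X \<in> carrier_mat d d" "Y \<in> carrier_mat d d"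
  shows "F (a \<cdot>\<^sub>m X + c \<cdot>\<^sub>m Y) = a \<cdot>\<^sub>m F X + c \<cdot>\<^sub>m F Y"
  using assms unfolding lin_map_def by simp

lemma lin_map_comp:
  assumes "lin_map d d' F" "lin_map d' d'' G"
  shows "lin_map d d'' (G \<circ> F)"
  using assms unfolding lin_map_def by simp

lemma lin_map_mult_left:
  assumes "A \<in> carrier_mat d d"
  shows "lin_map d d (\<lambda>X. A * X)"
  using assms unfolding lin_map_def by (simp add: mult_add_distrib_mat mult_smult_distrib)

lemma lin_map_mult_right:
  assumes "B \<in> carrier_mat d d"
  shows "lin_map d d (\<lambda>X. X * B)"
  using assms unfolding lin_map_def by (simp add: add_mult_distrib_mat mult_smult_assoc_mat)

lemma smult_add_smult_same_mat:
  fixes X :: "'a :: semiring_1 mat"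
  assumes "X \<in> carrier_mat r c" "a + b = 1"
  shows "a \<cdot>\<^sub>m X + b \<cdot>\<^sub>m X = X"
proof -
  have "a \<cdot>\<^sub>m X + b \<cdot>\<^sub>m X = (a + b) \<cdot>\<^sub>m X"
    using add_smult_distrib_right_mat[OF assms(1)] by simp
  also have "\<dots> = X"
    using assms by (intro eq_matI) auto
  finally show ?thesis .
qed

lemma mtrace_linear_combination:
  assumes "X \<in> carrier_mat d d" "Y \<in> carrier_mat d d"
  shows "mtrace (a \<cdot>\<^sub>m X + c \<cdot>\<^sub>m Y) = a * mtrace X + c * mtrace Y"
  using assms unfolding mtrace_def by (simp add: sum.distrib sum_distrib_left)

fun run_steps :: "complex mat \<Rightarrow> (nat \<Rightarrow> complex mat \<Rightarrow> complex mat) \<Rightarrow> nat \<Rightarrow> complex mat" where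
  "run_steps X0 T 0 = X0"
| "run_steps X0 T (Suc k) = T (Suc k) (run_steps X0 T k)"

lemma run_steps_fun_upd_before:
  "k < j \<Longrightarrow> run_steps X0 (T(j := F)) k = run_steps X0 (T(j := G)) k"
  by (induction k) auto

lemma run_steps_carrier:
  assumes "X0 \<in> carrier_mat (d 0) (d 0)"
    and "\<forall>k\<in>{1..n}. \<forall>X \<in> carrier_mat (d (k - 1)) (d (k - 1)). T k X \<in> carrier_mat (d k) (d k)"
  shows "k \<le> n \<Longrightarrow> run_steps X0 T k \<in> carrier_mat (d k) (d k)"
  using assms by (induction k) auto

lemma run_steps_fun_upd_carrier:
  assumes X0: "X0 \<in> carrier_mat (d 0) (d 0)"
    and T: "\<forall>k\<in>{1..n} - {j}. lin_map (d (k - 1)) (d k) (T k)"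
    and F: "\<forall>X \<in> carrier_mat (d (j - 1)) (d (j - 1)). F X \<in> carrier_mat (d j) (d j)"
    and "k \<le> n"
  shows "run_steps X0 (T(j := F)) k \<in> carrier_mat (d k) (d k)"
proof -
  have "\<forall>i\<in>{1..n}. \<forall>X \<in> carrier_mat (d (i - 1)) (d (i - 1)). (T(j := F)) i X \<in> carrier_mat (d i) (d i)"
  proof (intro ballI)
    fix i and X :: "complex mat"
    assume i: "i \<in> {1..n}" and X: "X \<in> carrier_mat (d (i - 1)) (d (i - 1))"
    show "(T(j := F)) i X \<in> carrier_mat (d i) (d i)"
    proof (cases "i = j")
      case True
      then show ?thesis using F X by simp
    next
      case False
      with i have "i \<in> {1..n} - {j}" by simp
      from lin_map_carrier[OF bspec[OF T this] X] False show ?thesis by simp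
    qed
  qed
  from run_steps_carrier[OF X0 this \<open>k \<le> n\<close>] show ?thesis .
qed

lemma run_steps_mix:
  assumes X0: "X0 \<in> carrier_mat (d 0) (d 0)"
    and T: "\<forall>k\<in>{1..n} - {j}. lin_map (d (k - 1)) (d k) (T k)"
    and F: "\<forall>X \<in> carrier_mat (d (j - 1)) (d (j - 1)). F X \<in> carrier_mat (d j) (d j)"
    and G: "\<forall>X \<in> carrier_mat (d (j - 1)) (d (j - 1)). G X \<in> carrier_mat (d j) (d j)"
    and H: "\<forall>X \<in> carrier_mat (d (j - 1)) (d (j - 1)). H X = a \<cdot>\<^sub>m F X + c \<cdot>\<^sub>m G X"
    and ac: "a + c = 1"
  shows "k \<le> n \<Longrightarrow> run_steps X0 (T(j := H)) k
           = a \<cdot>\<^sub>m run_steps X0 (T(j := F)) k + c \<cdot>\<^sub>m run_steps X0 (T(j := G)) k"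
proof (induction k)
  case 0
  show ?case using smult_add_smult_same_mat[OF X0 ac] by simp
next
  case (Suc k)
  let ?A = "run_steps X0 (T(j := F)) k" and ?B = "run_steps X0 (T(j := G)) k"
  note carrier = run_steps_fun_upd_carrier[OF X0 T _ Suc_leD[OF Suc.prems]]
  have IH: "run_steps X0 (T(j := H)) k = a \<cdot>\<^sub>m ?A + c \<cdot>\<^sub>m ?B"
    using Suc.IH[OF Suc_leD[OF Suc.prems]] .
  show ?case
  proof (cases "Suc k = j")
    case True
    then have j: "j = Suc k" by simp
    have step: "run_steps X0 (T(j := U)) (Suc k) = U (run_steps X0 (T(j := U)) k)" for U
      using j by simp
    have "?A = ?B" using run_steps_fun_upd_before j by simp
    then have "run_steps X0 (T(j := H)) k = ?B"
      using IH smult_add_smult_same_mat[OF carrier[OF G] ac] by simp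
    moreover have "?B \<in> carrier_mat (d (j - 1)) (d (j - 1))" using carrier[OF G] j by simp
    ultimately show ?thesis unfolding step using H \<open>?A = ?B\<close> by simp
  next
    case False
    have step: "run_steps X0 (T(j := U)) (Suc k) = T (Suc k) (run_steps X0 (T(j := U)) k)" for U
      using False by simp
    have "Suc k \<in> {1..n} - {j}" using Suc.prems False by simp
    from bspec[OF T this] have "lin_map (d k) (d (Suc k)) (T (Suc k))" by simp
    then show ?thesis
      unfolding step IH by (rule lin_map_linear_combination[OF _ carrier[OF F] carrier[OF G]])
  qed
qed

lemma cmod_convex_combination_le:
  fixes lam :: real
  assumes "0 \<le> lam" "lam \<le> 1"
  shows "cmod (complex_of_real lam * x + complex_of_real (1 - lam) * y) \<le> lam * cmod x + (1 - lam) * cmod y"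
proof -
  have "cmod (complex_of_real lam * x + complex_of_real (1 - lam) * y)
     \<le> cmod (complex_of_real lam * x) + cmod (complex_of_real (1 - lam) * y)"
    by (rule norm_triangle_ineq)
  also have "\<dots> = lam * cmod x + (1 - lam) * cmod y"
    using assms by (simp add: norm_mult del: of_real_diff)
  finally show ?thesis .
qed

lemma sum_minus_one_convex_le:
  fixes lam :: real and f g h :: "'a \<Rightarrow> real"
  assumes "\<And>x. x \<in> A \<Longrightarrow> f x \<le> lam * g x + (1 - lam) * h x"
  shows "(\<Sum>x\<in>A. f x) - 1 \<le> lam * ((\<Sum>x\<in>A. g x) - 1) + (1 - lam) * ((\<Sum>x\<in>A. h x) - 1)"
proof -
  have "(\<Sum>x\<in>A. f x) \<le> (\<Sum>x\<in>A. lam * g x + (1 - lam) * h x)"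
    using assms by (rule sum_mono)
  also have "\<dots> = lam * (\<Sum>x\<in>A. g x) + (1 - lam) * (\<Sum>x\<in>A. h x)"
    by (simp add: sum.distrib sum_distrib_left)
  finally show ?thesis by (simp add: algebra_simps)
qed

lemma cmod_mtrace_run_steps_mix_le:
  fixes lam :: real
  assumes X0: "X0 \<in> carrier_mat (d 0) (d 0)"
    and S: "\<forall>k\<le>n. lin_map (d k) (d k) (S k)"
    and Ch: "\<forall>k\<in>{1..n} - {j}. lin_map (d (k - 1)) (d k) (Ch k)"
    and j: "j \<le> n"
    and E: "lin_map (d (j - 1)) (d j) E"
    and K: "lin_map (d (j - 1)) (d j) K"
    and lam: "0 \<le> lam" "lam \<le> 1"
  shows "cmod (mtrace (run_steps X0 (\<lambda>k. S k \<circ> (Ch(j := mix_map lam E K)) k) n))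
    \<le> lam * cmod (mtrace (run_steps X0 (\<lambda>k. S k \<circ> (Ch(j := E)) k) n))
      + (1 - lam) * cmod (mtrace (run_steps X0 (\<lambda>k. S k \<circ> (Ch(j := K)) k) n))"
proof -
  let ?T = "\<lambda>k. S k \<circ> Ch k"
  have upd: "(\<lambda>k. S k \<circ> (Ch(j := F)) k) = ?T(j := S j \<circ> F)" for F
    by auto
  have T: "\<forall>k\<in>{1..n} - {j}. lin_map (d (k - 1)) (d k) (?T k)"
    using Ch S by (auto intro: lin_map_comp)
  have Sj: "lin_map (d j) (d j) (S j)" using S j by simp
  have SE: "\<forall>X \<in> carrier_mat (d (j - 1)) (d (j - 1)). (S j \<circ> E) X \<in> carrier_mat (d j) (d j)"
    and SK: "\<forall>X \<in> carrier_mat (d (j - 1)) (d (j - 1)). (S j \<circ> K) X \<in> carrier_mat (d j) (d j)"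
    using lin_map_carrier[OF lin_map_comp[OF E Sj]] lin_map_carrier[OF lin_map_comp[OF K Sj]]
    by auto
  have mix: "\<forall>X \<in> carrier_mat (d (j - 1)) (d (j - 1)). (S j \<circ> mix_map lam E K) X
      = complex_of_real lam \<cdot>\<^sub>m (S j \<circ> E) X + complex_of_real (1 - lam) \<cdot>\<^sub>m (S j \<circ> K) X"
    using lin_map_linear_combination[OF Sj] lin_map_carrier[OF E] lin_map_carrier[OF K]
    by (simp add: mix_map_def)
  have "complex_of_real lam + complex_of_real (1 - lam) = 1" by simp
  note run_mix = run_steps_mix[OF X0 T SE SK mix this order_refl, folded upd]
  note carrier = run_steps_fun_upd_carrier[OF X0 T _ order_refl]
  let ?R = "\<lambda>F. mtrace (run_steps X0 (\<lambda>k. S k \<circ> (Ch(j := F)) k) n)"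
  have "cmod (?R (mix_map lam E K))
      = cmod (complex_of_real lam * ?R E + complex_of_real (1 - lam) * ?R K)"
    by (simp only: run_mix mtrace_linear_combination[OF carrier[OF SE] carrier[OF SK], folded upd])
  also have "\<dots> \<le> lam * cmod (?R E) + (1 - lam) * cmod (?R K)"
    by (rule cmod_convex_combination_le[OF lam])
  finally show ?thesis .
qed

lemma right_op_run_steps:
  "right_op \<rho> G P b k = run_steps (\<rho> * P 0 (b 0)) (\<lambda>i. (\<lambda>Y. Y * P i (b i)) \<circ> G i) k"
  by (induction k) auto

lemma left_op_run_steps:
  "left_op \<rho> G P a k = run_steps (P 0 (a 0) * \<rho>) (\<lambda>i. (\<lambda>Y. P i (a i) * Y) \<circ> G i) k"
  by (induction k) auto

lemma doubled_op_run_steps: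
  "doubled_op \<rho> G P a b k
     = run_steps (P 0 (a 0) * \<rho> * P 0 (b 0)) (\<lambda>i. ((\<lambda>Y. Y * P i (b i)) \<circ> (\<lambda>Y. P i (a i) * Y)) \<circ> G i) k"
  by (induction k) auto

context
  fixes n j :: nat and d m :: "nat \<Rightarrow> nat" and \<rho> :: "complex mat"
    and Ch :: "nat \<Rightarrow> complex mat \<Rightarrow> complex mat" and E K :: "complex mat \<Rightarrow> complex mat"
    and P :: "nat \<Rightarrow> nat \<Rightarrow> complex mat" and lam :: real
  assumes rho: "\<rho> \<in> carrier_mat (d 0) (d 0)"
    and chans: "\<forall>k\<in>{1..n} - {j}. lin_map (d (k - 1)) (d k) (Ch k)"
    and meas: "measurements n d m P"
    and j: "j \<le> n"
    and E: "lin_map (d (j - 1)) (d j) E"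
    and K: "lin_map (d (j - 1)) (d j) K"
    and lam: "0 \<le> lam" "lam \<le> 1"
begin

lemma projector_carrier:
  assumes "b \<in> outcomes n m" "k \<le> n"
  shows "P k (b k) \<in> carrier_mat (d k) (d k)"
proof -
  have "b k < m k" using assms unfolding outcomes_def by auto
  then show ?thesis using meas \<open>k \<le> n\<close> unfolding measurements_def proj_family_def by blast
qed

lemmas cmod_mtrace_mix_le = cmod_mtrace_run_steps_mix_le[OF _ _ chans j E K lam]

lemma neg_right_mix_le:
  "neg_right n m \<rho> (Ch(j := mix_map lam E K)) P
     \<le> lam * neg_right n m \<rho> (Ch(j := E)) P + (1 - lam) * neg_right n m \<rho> (Ch(j := K)) P"
  unfolding neg_right_def Q_right_def right_op_run_steps
proof (rule sum_minus_one_convex_le, rule cmod_mtrace_mix_le)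
  fix b assume b: "b \<in> outcomes n m"
  show "\<rho> * P 0 (b 0) \<in> carrier_mat (d 0) (d 0)"
    using mult_carrier_mat[OF rho projector_carrier[OF b le0]] .
  show "\<forall>k\<le>n. lin_map (d k) (d k) (\<lambda>Y. Y * P k (b k))"
    using projector_carrier[OF b] by (simp add: lin_map_mult_right)
qed

lemma neg_left_mix_le:
  "neg_left n m \<rho> (Ch(j := mix_map lam E K)) P
     \<le> lam * neg_left n m \<rho> (Ch(j := E)) P + (1 - lam) * neg_left n m \<rho> (Ch(j := K)) P"
  unfolding neg_left_def Q_left_def left_op_run_steps
proof (rule sum_minus_one_convex_le, rule cmod_mtrace_mix_le)
  fix a assume a: "a \<in> outcomes n m"
  show "P 0 (a 0) * \<rho> \<in> carrier_mat (d 0) (d 0)"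
    using mult_carrier_mat[OF projector_carrier[OF a le0] rho] .
  show "\<forall>k\<le>n. lin_map (d k) (d k) (\<lambda>Y. P k (a k) * Y)"
    using projector_carrier[OF a] by (simp add: lin_map_mult_left)
qed

lemma neg_doubled_mix_le:
  "neg_doubled n m \<rho> (Ch(j := mix_map lam E K)) P
     \<le> lam * neg_doubled n m \<rho> (Ch(j := E)) P + (1 - lam) * neg_doubled n m \<rho> (Ch(j := K)) P"
  unfolding neg_doubled_def Q_doubled_def doubled_op_run_steps case_prod_beta
proof (rule sum_minus_one_convex_le, rule cmod_mtrace_mix_le)
  fix ab assume "ab \<in> outcomes n m \<times> outcomes n m"
  then have a: "fst ab \<in> outcomes n m" and b: "snd ab \<in> outcomes n m" by auto
  show "P 0 (fst ab 0) * \<rho> * P 0 (snd ab 0) \<in> carrier_mat (d 0) (d 0)"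
    using mult_carrier_mat[OF mult_carrier_mat[OF projector_carrier[OF a le0] rho]
        projector_carrier[OF b le0]] .
  show "\<forall>k\<le>n. lin_map (d k) (d k) ((\<lambda>Y. Y * P k (snd ab k)) \<circ> (\<lambda>Y. P k (fst ab k) * Y))"
    using lin_map_comp[OF lin_map_mult_left[OF projector_carrier[OF a]]
        lin_map_mult_right[OF projector_carrier[OF b]]] by simp
qed

end

theorem mainTheorem8:
  fixes n j :: nat and d m :: "nat \<Rightarrow> nat" and \<rho> :: "complex mat"
    and Ch :: "nat \<Rightarrow> complex mat \<Rightarrow> complex mat"
    and \<E> \<K> :: "complex mat \<Rightarrow> complex mat"
    and P :: "nat \<Rightarrow> nat \<Rightarrow> complex mat" and lam :: real
  assumes dims: "\<forall>k\<le>n. d k > 0"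
    and rho: "density_op (d 0) \<rho>"
    and chans: "\<forall>k\<in>{1..n} - {j}. CPTP (d (k - 1)) (d k) (Ch k)"
    and meas: "measurements n d m P"
    and j: "j \<in> {1..n}"
    and E: "CPTP (d (j - 1)) (d j) \<E>"
    and K: "CPTP (d (j - 1)) (d j) \<K>"
    and hlam: "0 \<le> lam" "lam \<le> 1"
  shows "(neg_right n m \<rho> (Ch(j := mix_map lam \<E> \<K>)) P
           \<le> lam * neg_right n m \<rho> (Ch(j := \<E>)) P + (1 - lam) * neg_right n m \<rho> (Ch(j := \<K>)) P)
       \<and> (neg_left n m \<rho> (Ch(j := mix_map lam \<E> \<K>)) P
           \<le> lam * neg_left n m \<rho> (Ch(j := \<E>)) P + (1 - lam) * neg_left n m \<rho> (Ch(j := \<K>)) P)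
       \<and> (neg_doubled n m \<rho> (Ch(j := mix_map lam \<E> \<K>)) P
           \<le> lam * neg_doubled n m \<rho> (Ch(j := \<E>)) P + (1 - lam) * neg_doubled n m \<rho> (Ch(j := \<K>)) P)"
proof -
  have rho': "\<rho> \<in> carrier_mat (d 0) (d 0)" using rho unfolding density_op_def psd_def by simp
  have chans': "\<forall>k\<in>{1..n} - {j}. lin_map (d (k - 1)) (d k) (Ch k)"
    using chans unfolding CPTP_def by blast
  have E': "lin_map (d (j - 1)) (d j) \<E>" and K': "lin_map (d (j - 1)) (d j) \<K>"
    using E K unfolding CPTP_def by blast+
  have "j \<le> n" using j by simp
  note mix_le = neg_right_mix_le neg_left_mix_le neg_doubled_mix_le
  show ?thesis using mix_le[OF rho' chans' meas \<open>j \<le> n\<close> E' K' hlam] by blast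
qed

end
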